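(* Let $f,g\in R=A[t;\sigma,\delta]$ with $g$ not a zero divisor in $R$ and $Rf+Rg=R$. Suppose there is $m\in R$ with $Rm=Rf\cap Rg$, and let $f',g'\in R$ satisfy $m=f'g=g'f$. Let $T$ be any $(\sigma,\delta)$-pseudo-linear transformation on a left $A$-module $V$. Then: (a) $R/Rf'\cong R/Rf$ as left $R$-modules (via $h+Rf'\mapsto hg+Rf$); (b) $g(T)(\ker f(T))=\ker f'(T)$; (c) $\ker m(T)=\ker f(T)\oplus\ker g(T)$.
   Context: $A$ is a ring with $1$, $\sigma$ a unital ring endomorphism, $\delta$ a $\sigma$-derivation ($\delta$ additive, $\delta(ab)=\sigma(a)\delta(b)+\delta(a)b$); $R=A[t;\sigma,\delta]$ is the Ore extension with $ta=\sigma(a)t+\delta(a)$. A $(\sigma,\delta)$-pseudo-linear transformation on a left $A$-module $V$ is an additive $T:V\to V$ with $T(\alpha v)=\sigma(\alpha)T(v)+\delta(\alpha)v$; for $h=\sum a_it^i\in R$, $h(T)(v)=\sum a_iT^i(v)$. *)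

theory Defs
  imports "HOL-Computational_Algebra.Polynomial"
begin

text \<open>Elements are represented by their
  coefficient sequences (sum of a_i t^i, coefficients written on the left),
  using the type 'a poly only as a carrier of finitely supported coefficient
  sequences together with its (coefficientwise) addition. The multiplication
  is the Ore multiplication determined by t a = sigma(a) t + delta(a).\<close>

definition ore_lmult :: "'a::ring_1 \<Rightarrow> 'a poly \<Rightarrow> 'a poly" where
  "ore_lmult a p = map_poly (\<lambda>c. a * c) p"

definition ore_tmul :: "('a::ring_1 \<Rightarrow> 'a) \<Rightarrow> ('a \<Rightarrow> 'a) \<Rightarrow> 'a poly \<Rightarrow> 'a poly" where
  "ore_tmul \<sigma> \<delta> p = pCons 0 (map_poly \<sigma> p) + map_poly \<delta> p"

definition ore_mult :: "('a::ring_1 \<Rightarrow> 'a) \<Rightarrow> ('a \<Rightarrow> 'a) \<Rightarrow> 'a poly \<Rightarrow> 'a poly \<Rightarrow> 'a poly" where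
  "ore_mult \<sigma> \<delta> p q = (\<Sum>i\<le>degree p. ore_lmult (coeff p i) ((ore_tmul \<sigma> \<delta> ^^ i) q))"

definition ring_endo :: "('a::ring_1 \<Rightarrow> 'a) \<Rightarrow> bool" where
  "ring_endo \<sigma> \<longleftrightarrow> (\<forall>a b. \<sigma> (a + b) = \<sigma> a + \<sigma> b) \<and> (\<forall>a b. \<sigma> (a * b) = \<sigma> a * \<sigma> b) \<and> \<sigma> 1 = 1"

definition sigma_derivation :: "('a::ring_1 \<Rightarrow> 'a) \<Rightarrow> ('a \<Rightarrow> 'a) \<Rightarrow> bool" where
  "sigma_derivation \<sigma> \<delta> \<longleftrightarrow> (\<forall>a b. \<delta> (a + b) = \<delta> a + \<delta> b) \<and>
     (\<forall>a b. \<delta> (a * b) = \<sigma> a * \<delta> b + \<delta> a * b)"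

definition left_module :: "('a::ring_1 \<Rightarrow> 'v::ab_group_add \<Rightarrow> 'v) \<Rightarrow> bool" where
  "left_module smul \<longleftrightarrow>
     (\<forall>a x y. smul a (x + y) = smul a x + smul a y) \<and>
     (\<forall>a b x. smul (a + b) x = smul a x + smul b x) \<and>
     (\<forall>a b x. smul (a * b) x = smul a (smul b x)) \<and>
     (\<forall>x. smul 1 x = x)"

definition pseudo_linear ::
  "('a::ring_1 \<Rightarrow> 'a) \<Rightarrow> ('a \<Rightarrow> 'a) \<Rightarrow> ('a \<Rightarrow> 'v::ab_group_add \<Rightarrow> 'v) \<Rightarrow> ('v \<Rightarrow> 'v) \<Rightarrow> bool" where
  "pseudo_linear \<sigma> \<delta> smul T \<longleftrightarrow>
     (\<forall>x y. T (x + y) = T x + T y) \<and>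
     (\<forall>a v. T (smul a v) = smul (\<sigma> a) (T v) + smul (\<delta> a) v)"

definition ore_eval :: "('a::ring_1 \<Rightarrow> 'v::ab_group_add \<Rightarrow> 'v) \<Rightarrow> 'a poly \<Rightarrow> ('v \<Rightarrow> 'v) \<Rightarrow> 'v \<Rightarrow> 'v" where
  "ore_eval smul h T v = (\<Sum>i\<le>degree h. smul (coeff h i) ((T ^^ i) v))"

definition ore_ker :: "('a::ring_1 \<Rightarrow> 'v::ab_group_add \<Rightarrow> 'v) \<Rightarrow> 'a poly \<Rightarrow> ('v \<Rightarrow> 'v) \<Rightarrow> 'v set" where
  "ore_ker smul h T = {v. ore_eval smul h T v = 0}"

definition ore_lideal :: "('a::ring_1 \<Rightarrow> 'a) \<Rightarrow> ('a \<Rightarrow> 'a) \<Rightarrow> 'a poly \<Rightarrow> 'a poly set" where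
  "ore_lideal \<sigma> \<delta> h = {ore_mult \<sigma> \<delta> r h | r. True}"

end

theory Submission
  imports Defs
begin

text \<open>
  Evaluation h \<mapsto> h(T) turns a left A-module V with a pseudo-linear map T into
  a left module over the Ore extension R: it is additive in h and satisfies
  (h k)(T) = h(T) \<circ> k(T).  Applying this to V = R itself, with T the left multiplication
  by t, shows that the Ore multiplication is associative and bilinear with unit 1, so
  R is a ring and left ideals R h behave as expected.

  The hypotheses are then used only through a Bezout identity 1 = a f + b g (from
  R f + R g = R), the lcm identity R m = R f \<inter> R g, m = f' g = g' f, and the right
  cancellability of g.  From these, right multiplication by g induces a bijection
  R/R f' \<rightarrow> R/R f (part (a)); the elements f b and g b - 1 lie in R f', so b(T) is a
  right inverse of g(T) from ker f'(T) into ker f(T) (part (b)); and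
  v = (b g)(T) v + (a f)(T) v splits ker m(T) into ker f(T) \<oplus> ker g(T) (part (c)).
\<close>

lemma degree_map_poly_le0: "f 0 = 0 \<Longrightarrow> degree (map_poly f p) \<le> degree p"
  by (rule degree_le) (simp add: coeff_map_poly coeff_eq_0)

section \<open>Evaluation of Ore polynomials at a pseudo-linear map\<close>

locale scalar_action =
  fixes smul :: "'a::ring_1 \<Rightarrow> 'v::ab_group_add \<Rightarrow> 'v"
  assumes module: "left_module smul"
begin

lemma smul_add_right: "smul a (x + y) = smul a x + smul a y"
  and smul_add_left: "smul (a + b) x = smul a x + smul b x"
  and smul_mult: "smul (a * b) x = smul a (smul b x)"
  and smul_one: "smul 1 x = x"
  using module unfolding left_module_def by blast+

lemma smul_zero_right: "smul a 0 = 0"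
  using smul_add_right[of a 0 0] by simp

lemma smul_zero_left: "smul 0 x = 0"
  using smul_add_left[of 0 0 x] by simp

lemma smul_sum_right: "smul a (\<Sum>i\<in>I. x i) = (\<Sum>i\<in>I. smul a (x i))"
  by (induction I rule: infinite_finite_induct) (simp_all add: smul_zero_right smul_add_right)

lemma ore_eval_bound:
  assumes "degree h \<le> N"
  shows "ore_eval smul h T v = (\<Sum>i\<le>N. smul (coeff h i) ((T ^^ i) v))"
  unfolding ore_eval_def
  by (rule sum.mono_neutral_left) (use assms in \<open>auto simp: coeff_eq_0 smul_zero_left\<close>)

lemma ore_eval_add: "ore_eval smul (p + q) T v = ore_eval smul p T v + ore_eval smul q T v"
proof -
  let ?N = "max (degree p) (degree q)"
  have "ore_eval smul (p + q) T v = (\<Sum>i\<le>?N. smul (coeff (p + q) i) ((T ^^ i) v))"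
    by (rule ore_eval_bound) (simp add: degree_add_le)
  also have "\<dots> = (\<Sum>i\<le>?N. smul (coeff p i) ((T ^^ i) v)) + (\<Sum>i\<le>?N. smul (coeff q i) ((T ^^ i) v))"
    by (simp add: smul_add_left sum.distrib)
  also have "\<dots> = ore_eval smul p T v + ore_eval smul q T v"
    by (simp add: ore_eval_bound[of p ?N] ore_eval_bound[of q ?N])
  finally show ?thesis .
qed

lemma ore_eval_zero: "ore_eval smul 0 T v = 0"
  by (simp add: ore_eval_def smul_zero_left)

lemma ore_eval_one: "ore_eval smul [:1:] T v = v"
  by (simp add: ore_eval_def smul_one)

lemma ore_eval_diff: "ore_eval smul (p - q) T v = ore_eval smul p T v - ore_eval smul q T v"
  using ore_eval_add[of "p - q" q T v] by (simp add: algebra_simps)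

lemma ore_eval_sum: "ore_eval smul (\<Sum>i\<in>I. p i) T v = (\<Sum>i\<in>I. ore_eval smul (p i) T v)"
  by (induction I rule: infinite_finite_induct) (simp_all add: ore_eval_zero ore_eval_add)

lemma ore_eval_lmult: "ore_eval smul (ore_lmult a p) T v = smul a (ore_eval smul p T v)"
proof -
  have "ore_eval smul (ore_lmult a p) T v = (\<Sum>i\<le>degree p. smul (coeff (ore_lmult a p) i) ((T ^^ i) v))"
    by (rule ore_eval_bound) (simp add: ore_lmult_def degree_map_poly_le0)
  then show ?thesis
    by (simp add: ore_lmult_def coeff_map_poly ore_eval_def smul_sum_right smul_mult)
qed

end

locale ore_data =
  fixes \<sigma> \<delta> :: "'a::ring_1 \<Rightarrow> 'a"
  assumes endo: "ring_endo \<sigma>" and deriv: "sigma_derivation \<sigma> \<delta>"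
begin

lemma sigma_add: "\<sigma> (a + b) = \<sigma> a + \<sigma> b"
  and sigma_mult: "\<sigma> (a * b) = \<sigma> a * \<sigma> b"
  and sigma_one: "\<sigma> 1 = 1"
  using endo unfolding ring_endo_def by blast+

lemma delta_add: "\<delta> (a + b) = \<delta> a + \<delta> b"
  and delta_mult: "\<delta> (a * b) = \<sigma> a * \<delta> b + \<delta> a * b"
  using deriv unfolding sigma_derivation_def by blast+

lemma sigma_zero: "\<sigma> 0 = 0"
  using sigma_add[of 0 0] by simp

lemma delta_zero: "\<delta> 0 = 0"
  using delta_add[of 0 0] by simp

lemma delta_one: "\<delta> 1 = 0"
  using delta_mult[of 1 1] by (simp add: sigma_one)

end

locale pseudo_linear_map = ore_data \<sigma> \<delta> + scalar_action smul
  for \<sigma> \<delta> :: "'a::ring_1 \<Rightarrow> 'a" and smul :: "'a \<Rightarrow> 'v::ab_group_add \<Rightarrow> 'v" +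
  fixes T :: "'v \<Rightarrow> 'v"
  assumes pseudo_lin: "pseudo_linear \<sigma> \<delta> smul T"
begin

lemma T_add: "T (x + y) = T x + T y"
  and T_smul: "T (smul a v) = smul (\<sigma> a) (T v) + smul (\<delta> a) v"
  using pseudo_lin unfolding pseudo_linear_def by blast+

lemma T_zero: "T 0 = 0"
  using T_add[of 0 0] by simp

lemma T_sum: "T (\<Sum>i\<in>I. x i) = (\<Sum>i\<in>I. T (x i))"
  by (induction I rule: infinite_finite_induct) (simp_all add: T_zero T_add)

lemma T_pow_add: "(T ^^ n) (x + y) = (T ^^ n) x + (T ^^ n) y"
  by (induction n) (simp_all add: T_add)

lemma T_pow_zero: "(T ^^ n) 0 = 0"
  by (induction n) (simp_all add: T_zero)

lemma ore_eval_vadd: "ore_eval smul h T (x + y) = ore_eval smul h T x + ore_eval smul h T y"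
  by (simp add: ore_eval_def T_pow_add smul_add_right sum.distrib)

lemma ore_eval_vzero: "ore_eval smul h T 0 = 0"
  by (simp add: ore_eval_def T_pow_zero smul_zero_right)

text \<open>The key computation: (t p)(T) = T \<circ> p(T); this is where pseudo-linearity enters.\<close>
lemma ore_eval_tmul: "ore_eval smul (ore_tmul \<sigma> \<delta> p) T v = T (ore_eval smul p T v)"
proof -
  let ?d = "degree p"
  have "degree (pCons 0 (map_poly \<sigma> p)) \<le> Suc ?d"
    by (meson Suc_le_mono degree_map_poly_le0 degree_pCons_le le_trans sigma_zero)
  then have "ore_eval smul (pCons 0 (map_poly \<sigma> p)) T v
      = (\<Sum>i\<le>Suc ?d. smul (coeff (pCons 0 (map_poly \<sigma> p)) i) ((T ^^ i) v))"
    by (rule ore_eval_bound)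
  also have "\<dots> = (\<Sum>i\<le>?d. smul (\<sigma> (coeff p i)) ((T ^^ Suc i) v))"
    by (subst sum.atMost_Suc_shift) (simp add: smul_zero_left coeff_map_poly sigma_zero)
  finally have shifted: "ore_eval smul (pCons 0 (map_poly \<sigma> p)) T v
      = (\<Sum>i\<le>?d. smul (\<sigma> (coeff p i)) ((T ^^ Suc i) v))" .
  have derived: "ore_eval smul (map_poly \<delta> p) T v = (\<Sum>i\<le>?d. smul (\<delta> (coeff p i)) ((T ^^ i) v))"
    by (subst ore_eval_bound[of _ ?d]) (simp_all add: degree_map_poly_le0 delta_zero coeff_map_poly)
  have "T (ore_eval smul p T v) = (\<Sum>i\<le>?d. T (smul (coeff p i) ((T ^^ i) v)))"
    by (simp add: ore_eval_def T_sum)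
  also have "\<dots> = (\<Sum>i\<le>?d. smul (\<sigma> (coeff p i)) ((T ^^ Suc i) v))
                 + (\<Sum>i\<le>?d. smul (\<delta> (coeff p i)) ((T ^^ i) v))"
    by (simp add: T_smul sum.distrib)
  finally show ?thesis
    unfolding ore_tmul_def ore_eval_add shifted derived by simp
qed

lemma ore_eval_tmul_pow: "ore_eval smul ((ore_tmul \<sigma> \<delta> ^^ n) p) T v = (T ^^ n) (ore_eval smul p T v)"
  by (induction n) (simp_all add: ore_eval_tmul)

lemma ore_eval_mult: "ore_eval smul (ore_mult \<sigma> \<delta> p q) T v = ore_eval smul p T (ore_eval smul q T v)"
  unfolding ore_mult_def ore_eval_sum ore_eval_lmult ore_eval_tmul_pow by (simp add: ore_eval_def)

end

section \<open>The Ore extension is a ring\<close>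

lemma scalar_action_ore_lmult: "scalar_action (ore_lmult :: 'a::ring_1 \<Rightarrow> 'a poly \<Rightarrow> 'a poly)"
  unfolding scalar_action_def left_module_def ore_lmult_def
  by (auto simp: poly_eq_iff coeff_map_poly algebra_simps)

lemma ore_mult_is_eval: "ore_mult \<sigma> \<delta> h q = ore_eval ore_lmult h (ore_tmul \<sigma> \<delta>) q"
  unfolding ore_mult_def ore_eval_def ..

context ore_data
begin

abbreviation omult :: "'a poly \<Rightarrow> 'a poly \<Rightarrow> 'a poly" (infixl "\<star>" 70)
  where "p \<star> q \<equiv> ore_mult \<sigma> \<delta> p q"

abbreviation lideal :: "'a poly \<Rightarrow> 'a poly set"
  where "lideal h \<equiv> ore_lideal \<sigma> \<delta> h"

lemma pseudo_linear_tmul: "pseudo_linear_map \<sigma> \<delta> ore_lmult (ore_tmul \<sigma> \<delta>)"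
proof -
  have "pseudo_linear \<sigma> \<delta> ore_lmult (ore_tmul \<sigma> \<delta>)"
    unfolding pseudo_linear_def ore_tmul_def ore_lmult_def
    by (auto simp: poly_eq_iff coeff_map_poly coeff_pCons' sigma_zero delta_zero
        sigma_add sigma_mult delta_add delta_mult algebra_simps)
  then show ?thesis
    using scalar_action_ore_lmult by (simp add: pseudo_linear_map_def pseudo_linear_map_axioms_def ore_data_axioms)
qed

interpretation R: pseudo_linear_map \<sigma> \<delta> ore_lmult "ore_tmul \<sigma> \<delta>"
  by (rule pseudo_linear_tmul)

lemma omult_assoc: "(p \<star> q) \<star> r = p \<star> (q \<star> r)"
  unfolding ore_mult_is_eval by (rule R.ore_eval_mult[unfolded ore_mult_is_eval])

lemma omult_add_left: "(p + q) \<star> r = p \<star> r + q \<star> r"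
  unfolding ore_mult_is_eval by (rule R.ore_eval_add)

lemma omult_diff_left: "(p - q) \<star> r = p \<star> r - q \<star> r"
  unfolding ore_mult_is_eval by (rule R.ore_eval_diff)

lemma omult_zero_left: "0 \<star> r = 0"
  unfolding ore_mult_is_eval by (rule R.ore_eval_zero)

lemma omult_minus_left: "(- p) \<star> r = - (p \<star> r)"
  using omult_diff_left[of 0 p r] by (simp add: omult_zero_left)

lemma omult_one_left: "[:1:] \<star> r = r"
  unfolding ore_mult_is_eval by (rule R.ore_eval_one)

lemma omult_add_right: "h \<star> (p + q) = h \<star> p + h \<star> q"
  unfolding ore_mult_is_eval by (rule R.ore_eval_vadd)

lemma omult_diff_right: "h \<star> (p - q) = h \<star> p - h \<star> q"
  using omult_add_right[of h "p - q" q] by (simp add: algebra_simps)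

text \<open>Right unit: t^i \<cdot> 1 is the monomial t^i, so h \<cdot> 1 reassembles h from its monomials.\<close>
lemma tmul_pow_one: "(ore_tmul \<sigma> \<delta> ^^ i) [:1:] = monom 1 i"
  by (induction i)
    (auto simp: monom_0 ore_tmul_def poly_eq_iff coeff_map_poly coeff_pCons'
      sigma_zero delta_zero sigma_one delta_one)

lemma omult_one_right: "h \<star> [:1:] = h"
proof -
  have "h \<star> [:1:] = (\<Sum>i\<le>degree h. monom (coeff h i) i)"
    unfolding ore_mult_def tmul_pow_one
    by (rule sum.cong) (auto simp: ore_lmult_def poly_eq_iff coeff_map_poly)
  then show ?thesis by (simp add: poly_as_sum_of_monoms)
qed

lemmas omult_simps = omult_assoc omult_add_left omult_diff_left omult_zero_left omult_minus_left omult_one_left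
  omult_add_right omult_diff_right omult_one_right

lemma lideal_iff: "x \<in> lideal h \<longleftrightarrow> (\<exists>r. x = r \<star> h)"
  unfolding ore_lideal_def by blast

lemma lideal_multI: "r \<star> h \<in> lideal h"
  by (auto simp: lideal_iff)

lemma lideal_zero: "0 \<in> lideal h"
  using lideal_multI[of 0 h] by (simp add: omult_zero_left)

lemma lideal_self: "h \<in> lideal h"
  using lideal_multI[of "[:1:]" h] by (simp add: omult_one_left)

text \<open>If 1 = a f + b g, then f b g = (1 - f a) f lies in R f as well as in R g.\<close>
lemma bezout_cross:
  assumes "[:1:] = a \<star> f + b \<star> g"
  shows "f \<star> (b \<star> g) \<in> lideal f \<inter> lideal g"
proof -
  have "b \<star> g = [:1:] - a \<star> f"
    using assms by (simp add: eq_diff_eq)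
  then have "f \<star> (b \<star> g) = ([:1:] - f \<star> a) \<star> f"
    by (simp add: omult_simps)
  then show ?thesis
    by (metis IntI lideal_multI omult_assoc)
qed

end

section \<open>Right multiplication by g between cyclic modules\<close>

text \<open>
  The setting of the proposition: a Bezout identity 1 = a f + b g, the lcm m = f' g = g' f of
  f and g, and g right-cancellable.  Nothing else about f, g, m is used.
\<close>
locale coprime_lcm = ore_data \<sigma> \<delta>
  for \<sigma> \<delta> :: "'a::ring_1 \<Rightarrow> 'a" +
  fixes f g m f' g' a b :: "'a poly"
  assumes bezout: "[:1:] = a \<star> f + b \<star> g"
    and lcm: "lideal m = lideal f \<inter> lideal g"
    and m_right_g: "m = f' \<star> g"
    and m_right_f: "m = g' \<star> f"
    and g_cancel: "\<And>h. h \<star> g = 0 \<Longrightarrow> h = 0"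
begin

lemma mult_g_into:
  assumes "h \<in> lideal f'"
  shows "h \<star> g \<in> lideal f"
proof -
  obtain r where "h = r \<star> f'"
    using assms by (auto simp: lideal_iff)
  then have "h \<star> g = (r \<star> g') \<star> f"
    by (simp add: omult_assoc flip: m_right_g m_right_f)
  then show ?thesis
    by (simp add: lideal_multI)
qed

lemma mult_g_reflect:
  assumes "h \<star> g \<in> lideal f"
  shows "h \<in> lideal f'"
proof -
  have "h \<star> g \<in> lideal m"
    using assms lideal_multI[of h g] by (simp add: lcm)
  then obtain s where "h \<star> g = s \<star> m"
    by (auto simp: lideal_iff)
  then have "(h - s \<star> f') \<star> g = 0"
    by (simp add: m_right_g omult_simps)
  then have "h = s \<star> f'"
    using g_cancel by fastforce
  then show ?thesis
    by (simp add: lideal_multI)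
qed

lemma mult_g_onto: "\<exists>h. k - h \<star> g \<in> lideal f"
proof -
  have "k = k \<star> a \<star> f + k \<star> b \<star> g"
    using bezout by (metis omult_one_right omult_add_right omult_assoc)
  then show ?thesis
    by (metis add_diff_cancel_right' lideal_multI)
qed

lemma lcm_contains_cross: "f \<star> (b \<star> g) \<in> lideal m" "g \<star> (a \<star> f) \<in> lideal m"
  using bezout_cross[OF bezout] bezout_cross[of b g a f] bezout
  by (simp_all add: lcm add.commute)

lemma f_b_in_lideal: "f \<star> b \<in> lideal f'"
  using bezout_cross[OF bezout] by (intro mult_g_reflect) (simp add: omult_assoc)

lemma g_b_minus_one_in_lideal: "g \<star> b - [:1:] \<in> lideal f'"
proof (rule mult_g_reflect)
  have "b \<star> g = [:1:] - a \<star> f"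
    using bezout by (simp add: eq_diff_eq)
  then have "(g \<star> b - [:1:]) \<star> g = (- (g \<star> a)) \<star> f"
    by (simp add: omult_simps)
  then show "(g \<star> b - [:1:]) \<star> g \<in> lideal f"
    by (simp add: lideal_multI)
qed

end

section \<open>Kernels of evaluated Ore polynomials\<close>

context pseudo_linear_map
begin

abbreviation ker :: "'a poly \<Rightarrow> 'v set"
  where "ker h \<equiv> ore_ker smul h T"

lemma ker_iff: "v \<in> ker h \<longleftrightarrow> ore_eval smul h T v = 0"
  by (simp add: ore_ker_def)

lemma ker_lideal:
  assumes "x \<in> lideal h" and "v \<in> ker h"
  shows "v \<in> ker x"
  using assms by (auto simp: lideal_iff ker_iff ore_eval_mult ore_eval_vzero)

lemma ker_image_eq:
  assumes into: "f' \<star> g \<in> lideal f"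
    and annihilated: "f \<star> b \<in> lideal f'"
    and right_inverse: "g \<star> b - [:1:] \<in> lideal f'"
  shows "ore_eval smul g T ` ker f = ker f'"
proof
  show "ore_eval smul g T ` ker f \<subseteq> ker f'"
    using ker_lideal[OF into] by (auto simp: ker_iff ore_eval_mult)
next
  show "ker f' \<subseteq> ore_eval smul g T ` ker f"
  proof
    fix w assume w: "w \<in> ker f'"
    have "ore_eval smul f T (ore_eval smul b T w) = 0"
      using ker_lideal[OF annihilated w] by (simp add: ker_iff ore_eval_mult)
    moreover have "ore_eval smul g T (ore_eval smul b T w) = w"
      using ker_lideal[OF right_inverse w]
      by (simp add: ker_iff ore_eval_diff ore_eval_one flip: ore_eval_mult)
    ultimately show "w \<in> ore_eval smul g T ` ker f"
      by (metis ker_iff image_eqI)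
  qed
qed

lemma ker_disjoint:
  assumes "[:1:] = a \<star> f + b \<star> g"
  shows "ker f \<inter> ker g = {0}"
proof -
  have "v = 0" if "v \<in> ker f" "v \<in> ker g" for v
  proof -
    have "v = ore_eval smul [:1:] T v"
      by (simp add: ore_eval_one)
    also have "\<dots> = 0"
      using that by (simp only: assms ore_eval_add ore_eval_mult ker_iff ore_eval_vzero) simp
    finally show ?thesis .
  qed
  then show ?thesis
    by (auto simp: ker_iff ore_eval_vzero)
qed

text \<open>Part (c): with 1 = a f + b g, a common left multiple m of f and g whose left ideal
  contains f b g and g a f has kernel ker f(T) + ker g(T), the splitting being
  v = (b g)(T) v + (a f)(T) v.\<close>
lemma ker_sum:
  assumes bez: "[:1:] = a \<star> f + b \<star> g"
    and multiple: "m \<in> lideal f" "m \<in> lideal g"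
    and cross: "f \<star> (b \<star> g) \<in> lideal m" "g \<star> (a \<star> f) \<in> lideal m"
  shows "ker m = {x + y | x y. x \<in> ker f \<and> y \<in> ker g}"
proof
  show "ker m \<subseteq> {x + y | x y. x \<in> ker f \<and> y \<in> ker g}"
  proof
    fix v assume v: "v \<in> ker m"
    have "v = ore_eval smul (b \<star> g) T v + ore_eval smul (a \<star> f) T v"
      using ore_eval_one[of T v] by (simp only: bez ore_eval_add add.commute)
    moreover have "ore_eval smul (b \<star> g) T v \<in> ker f" "ore_eval smul (a \<star> f) T v \<in> ker g"
      using ker_lideal[OF cross(1) v] ker_lideal[OF cross(2) v] by (simp_all add: ker_iff ore_eval_mult)
    ultimately show "v \<in> {x + y | x y. x \<in> ker f \<and> y \<in> ker g}"
      by blast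
  qed
next
  show "{x + y | x y. x \<in> ker f \<and> y \<in> ker g} \<subseteq> ker m"
    using ker_lideal[OF multiple(1)] ker_lideal[OF multiple(2)] by (auto simp: ker_iff ore_eval_vadd)
qed

end

theorem proposition1p16:
  fixes \<sigma> \<delta> :: "'a::ring_1 \<Rightarrow> 'a"
    and f g m f' g' :: "'a poly"
    and smul :: "'a \<Rightarrow> 'v::ab_group_add \<Rightarrow> 'v"
    and T :: "'v \<Rightarrow> 'v"
  assumes sigma: "ring_endo \<sigma>"
    and delta: "sigma_derivation \<sigma> \<delta>"
    and g_nzd: "\<forall>h. h \<noteq> 0 \<longrightarrow> ore_mult \<sigma> \<delta> h g \<noteq> 0 \<and> ore_mult \<sigma> \<delta> g h \<noteq> 0"
    and comax: "\<forall>h. \<exists>a b. h = ore_mult \<sigma> \<delta> a f + ore_mult \<sigma> \<delta> b g"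
    and lcm: "ore_lideal \<sigma> \<delta> m = ore_lideal \<sigma> \<delta> f \<inter> ore_lideal \<sigma> \<delta> g"
    and m1: "m = ore_mult \<sigma> \<delta> f' g"
    and m2: "m = ore_mult \<sigma> \<delta> g' f"
    and V: "left_module smul"
    and T: "pseudo_linear \<sigma> \<delta> smul T"
  shows
    "((\<forall>h1 h2. h1 - h2 \<in> ore_lideal \<sigma> \<delta> f' \<longrightarrow>
                ore_mult \<sigma> \<delta> h1 g - ore_mult \<sigma> \<delta> h2 g \<in> ore_lideal \<sigma> \<delta> f) \<and>
      (\<forall>h1 h2. ore_mult \<sigma> \<delta> (h1 + h2) g - (ore_mult \<sigma> \<delta> h1 g + ore_mult \<sigma> \<delta> h2 g)
                \<in> ore_lideal \<sigma> \<delta> f) \<and>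
      (\<forall>r h. ore_mult \<sigma> \<delta> (ore_mult \<sigma> \<delta> r h) g - ore_mult \<sigma> \<delta> r (ore_mult \<sigma> \<delta> h g)
                \<in> ore_lideal \<sigma> \<delta> f) \<and>
      (\<forall>h1 h2. ore_mult \<sigma> \<delta> h1 g - ore_mult \<sigma> \<delta> h2 g \<in> ore_lideal \<sigma> \<delta> f \<longrightarrow>
                h1 - h2 \<in> ore_lideal \<sigma> \<delta> f') \<and>
      (\<forall>k. \<exists>h. k - ore_mult \<sigma> \<delta> h g \<in> ore_lideal \<sigma> \<delta> f))
   \<and> ore_eval smul g T ` ore_ker smul f T = ore_ker smul f' T
   \<and> ore_ker smul f T \<inter> ore_ker smul g T = {0}
   \<and> ore_ker smul m T = {x + y | x y. x \<in> ore_ker smul f T \<and> y \<in> ore_ker smul g T}"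
proof -
  obtain a b where bezout: "[:1:] = ore_mult \<sigma> \<delta> a f + ore_mult \<sigma> \<delta> b g"
    using comax by blast
  interpret coprime_lcm \<sigma> \<delta> f g m f' g' a b
    using sigma delta bezout lcm m1 m2 g_nzd by unfold_locales auto
  interpret pseudo_linear_map \<sigma> \<delta> smul T
    using sigma delta V T by unfold_locales
  have part_b: "ore_eval smul g T ` ker f = ker f'"
    using f_b_in_lideal g_b_minus_one_in_lideal m_right_f m_right_g
    by (intro ker_image_eq) (auto simp: lideal_iff)
  have part_c: "ker m = {x + y | x y. x \<in> ker f \<and> y \<in> ker g}"
    using lcm lideal_self[of m] by (intro ker_sum[OF bezout _ _ lcm_contains_cross]) auto
  show ?thesis
  proof (intro conjI allI impI)
    show "h1 \<star> g - h2 \<star> g \<in> lideal f" if "h1 - h2 \<in> lideal f'" for h1 h2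
      using mult_g_into[OF that] by (simp add: omult_diff_left)
    show "h1 - h2 \<in> lideal f'" if "h1 \<star> g - h2 \<star> g \<in> lideal f" for h1 h2
      using that by (intro mult_g_reflect) (simp add: omult_diff_left)
  qed (use mult_g_onto part_b part_c ker_disjoint[OF bezout] in \<open>simp_all add: omult_simps lideal_zero\<close>)
qed

end
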